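(* Let $p\ge3$ be a prime and let $\mathbf{Q}_p(\sqrt d)$ be an unramified quadratic extension of $\mathbf{Q}_p$. Suppose $\lambda\in U^0(\sqrt d)$ has order $l$ modulo $p$, and let $k=\nu_p(\lambda^l-1)$. Then the closed subgroup of $U^0(\sqrt d)$ generated by $\lambda$ is $$\overline{\{\lambda^n:n\in\mathbf{N}\}}=\bigsqcup_{i=0}^{l-1}\left(\lambda^i+p^k\mathbf{Z}_p[\sqrt d]\right)\cap U^0(\sqrt d).$$ In particular, if $l=2(p+1)$ and $k=1$, then $\overline{\{\lambda^n:n\in\mathbf{N}\}}=U^0(\sqrt d)$.
   Context: Here $d\in\mathbf{Z}_p^*$ is a non-square, and $\mathbf{Z}_p[\sqrt d]$ is the ring of integers of $\mathbf{Q}_p(\sqrt d)$. The norm is $N(x+y\sqrt d)=x^2-y^2d$, and $U^0(\sqrt d)=\{z\in\mathbf{Z}_p[\sqrt d]^*: N(z)=\pm1\}$. The order of a unit $\lambda$ modulo $p$ is the least $l\ge1$ with $\lambda^l-1\in p\mathbf{Z}_p[\sqrt d]$. $\nu_p$ is the valuation on $\mathbf{Q}_p(\sqrt d)$ with $\nu_p(p)=1$. $\bigsqcup$ denotes disjoint union. *)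

theory Defs
  imports "HOL-Computational_Algebra.Primes" "HOL-Library.Extended_Nat"
begin

text \<open>p-adic integers as coherent sequences of residues: x n is the residue mod p^n.\<close>
type_synonym zp = "nat \<Rightarrow> int"
text \<open>Elements x + y sqrt d of Z_p[sqrt d] as pairs (x, y).\<close>
type_synonym zpd = "zp \<times> zp"

definition Zp :: "int \<Rightarrow> zp set" where
  "Zp p = {x. \<forall>n. 0 \<le> x n \<and> x n < p ^ n \<and> x (Suc n) mod p ^ n = x n}"

definition zp_add :: "int \<Rightarrow> zp \<Rightarrow> zp \<Rightarrow> zp" where
  "zp_add p x y = (\<lambda>n. (x n + y n) mod p ^ n)"
definition zp_mul :: "int \<Rightarrow> zp \<Rightarrow> zp \<Rightarrow> zp" where
  "zp_mul p x y = (\<lambda>n. (x n * y n) mod p ^ n)"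
definition zp_neg :: "int \<Rightarrow> zp \<Rightarrow> zp" where
  "zp_neg p x = (\<lambda>n. (- x n) mod p ^ n)"
definition zp_of_int :: "int \<Rightarrow> int \<Rightarrow> zp" where
  "zp_of_int p a = (\<lambda>n. a mod p ^ n)"

definition zp_unit :: "int \<Rightarrow> zp \<Rightarrow> bool" where
  "zp_unit p x \<longleftrightarrow> (\<exists>y\<in>Zp p. zp_mul p x y = zp_of_int p 1)"
definition zp_square :: "int \<Rightarrow> zp \<Rightarrow> bool" where
  "zp_square p x \<longleftrightarrow> (\<exists>y\<in>Zp p. zp_mul p y y = x)"

definition Zpd :: "int \<Rightarrow> zpd set" where
  "Zpd p = Zp p \<times> Zp p"

definition zpd_add :: "int \<Rightarrow> zpd \<Rightarrow> zpd \<Rightarrow> zpd" where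
  "zpd_add p z w = (zp_add p (fst z) (fst w), zp_add p (snd z) (snd w))"
definition zpd_sub :: "int \<Rightarrow> zpd \<Rightarrow> zpd \<Rightarrow> zpd" where
  "zpd_sub p z w = (zp_add p (fst z) (zp_neg p (fst w)), zp_add p (snd z) (zp_neg p (snd w)))"
definition zpd_mul :: "int \<Rightarrow> zp \<Rightarrow> zpd \<Rightarrow> zpd \<Rightarrow> zpd" where
  "zpd_mul p d z w =
     (zp_add p (zp_mul p (fst z) (fst w)) (zp_mul p d (zp_mul p (snd z) (snd w))),
      zp_add p (zp_mul p (fst z) (snd w)) (zp_mul p (snd z) (fst w)))"
definition zpd_one :: "int \<Rightarrow> zpd" where
  "zpd_one p = (zp_of_int p 1, zp_of_int p 0)"

primrec zpd_pow :: "int \<Rightarrow> zp \<Rightarrow> zpd \<Rightarrow> nat \<Rightarrow> zpd" where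
  "zpd_pow p d z 0 = zpd_one p"
| "zpd_pow p d z (Suc n) = zpd_mul p d z (zpd_pow p d z n)"

definition zpd_norm :: "int \<Rightarrow> zp \<Rightarrow> zpd \<Rightarrow> zp" where
  "zpd_norm p d z = zp_add p (zp_mul p (fst z) (fst z))
                      (zp_neg p (zp_mul p (zp_mul p (snd z) (snd z)) d))"

definition U0 :: "int \<Rightarrow> zp \<Rightarrow> zpd set" where
  "U0 p d = {z \<in> Zpd p. (\<exists>w\<in>Zpd p. zpd_mul p d z w = zpd_one p) \<and>
              (zpd_norm p d z = zp_of_int p 1 \<or> zpd_norm p d z = zp_neg p (zp_of_int p 1))}"

text \<open>The ideal p^k Z_p[sqrt d], k an extended natural (p^\<infinity> Z_p[sqrt d] = {0}).\<close>
definition pk_ideal :: "int \<Rightarrow> enat \<Rightarrow> zpd set" where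
  "pk_ideal p k = {w \<in> Zpd p. \<forall>j. enat j \<le> k \<longrightarrow> fst w j = 0 \<and> snd w j = 0}"

definition nu :: "int \<Rightarrow> zpd \<Rightarrow> enat" where
  "nu p z = Sup {enat j | j. z \<in> pk_ideal p (enat j)}"

definition mod_order :: "int \<Rightarrow> zp \<Rightarrow> zpd \<Rightarrow> nat" where
  "mod_order p d lam =
     (LEAST l. 1 \<le> l \<and> zpd_sub p (zpd_pow p d lam l) (zpd_one p) \<in> pk_ideal p (enat 1))"

definition zpd_closure :: "int \<Rightarrow> zpd set \<Rightarrow> zpd set" where
  "zpd_closure p S = {z \<in> Zpd p. \<forall>m. \<exists>s\<in>S. fst s m = fst z m \<and> snd s m = snd z m}"

definition zpd_coset :: "int \<Rightarrow> zpd \<Rightarrow> enat \<Rightarrow> zpd set" where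
  "zpd_coset p a k = (\<lambda>w. zpd_add p a w) ` pk_ideal p k"

end

theory Submission
  imports Defs "HOL-Number_Theory.Cong" "HOL-Number_Theory.Modular_Inverse"
begin

text \<open>
  Write lam^l = 1 + p^k u with k exact. As lam^l has norm 1 modulo p^(k+1), u has trace 0
  modulo p, so by exactness u is a unit multiple of sqrt d modulo p; taking p-th powers turns
  1 + p^m u into 1 + p^(m+1) u' with u' = u modulo p. If z has norm +-1 and agrees with
  lam^i modulo p^m, where m \<ge> k, then z / lam^i = 1 + p^m t with t again of trace 0
  modulo p, so a suitable power of lam^(l p^(m-k)) corrects the approximation modulo
  p^(m+1). Hence every element of U^0 in a coset lam^i + p^k Z_p[sqrt d] is a limit of
  powers of lam; conversely a limit of powers lies in such a coset because the powers are
  l-periodic modulo p^k, and the cosets for i < l are disjoint because the residues of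
  lam^i modulo p are distinct.

  For the last claim, d is a non-square modulo p by Hensel's lemma, so each of the conics
  x^2 - d y^2 = +-1 has at most p + 1 points over F_p. When l = 2 (p + 1) the residues of
  the lam^i therefore exhaust the residues of U^0, and with k = 1 every element of U^0
  lies in one of the cosets.
\<close>

section \<open>The ring Z[sqrt D] on pairs of integers\<close>

text \<open>A pair (x, y) stands for x + y sqrt D. Residues of Z_p[sqrt d] modulo p^m are
  computed in this ring with D = d m.\<close>

type_synonym qint = "int \<times> int"

definition qmul :: "int \<Rightarrow> qint \<Rightarrow> qint \<Rightarrow> qint" where
  "qmul D z w = (fst z * fst w + D * (snd z * snd w), fst z * snd w + snd z * fst w)"

primrec qpow :: "int \<Rightarrow> qint \<Rightarrow> nat \<Rightarrow> qint" where
  "qpow D z 0 = (1, 0)"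
| "qpow D z (Suc n) = qmul D z (qpow D z n)"

definition qnorm :: "int \<Rightarrow> qint \<Rightarrow> int" where
  "qnorm D z = fst z * fst z - D * (snd z * snd z)"

definition qconj :: "qint \<Rightarrow> qint" where
  "qconj z = (fst z, - snd z)"

definition qcong :: "int \<Rightarrow> qint \<Rightarrow> qint \<Rightarrow> bool" where
  "qcong q z w \<longleftrightarrow> [fst z = fst w] (mod q) \<and> [snd z = snd w] (mod q)"

definition qmod :: "int \<Rightarrow> qint \<Rightarrow> qint" where
  "qmod q z = (fst z mod q, snd z mod q)"

lemma qcong_iff_qmod_eq: "qcong q z w \<longleftrightarrow> qmod q z = qmod q w"
  by (simp add: qcong_def qmod_def cong_def prod_eq_iff)

lemma qcong_refl [simp]: "qcong q z z"
  by (simp add: qcong_def)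

lemma qcong_sym: "qcong q z w \<Longrightarrow> qcong q w z"
  by (auto simp: qcong_def cong_sym)

lemma qcong_trans: "qcong q z w \<Longrightarrow> qcong q w v \<Longrightarrow> qcong q z v"
  by (auto simp: qcong_def intro: cong_trans)

lemma qcong_iff_dvd_diff: "qcong q z w \<longleftrightarrow> q dvd fst z - fst w \<and> q dvd snd z - snd w"
  by (simp add: qcong_def cong_iff_dvd_diff)

lemma qcongE:
  assumes "qcong q z (w1, w2)"
  obtains a b where "z = (w1 + q * a, w2 + q * b)"
  using assms unfolding qcong_def by (metis cong_iff_lin cong_sym fst_conv snd_conv prod.collapse)

lemma qcong_dvd_modulus: "qcong q z w \<Longrightarrow> r dvd q \<Longrightarrow> qcong r z w"
  unfolding qcong_def using cong_dvd_modulus by blast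

lemma qcong_power_modulus_le: "qcong (p ^ M) z w \<Longrightarrow> m \<le> M \<Longrightarrow> qcong (p ^ m) z w"
  by (erule qcong_dvd_modulus) (simp add: le_imp_power_dvd)

lemma cong_power_modulus_le: "[a = b] (mod (p::int) ^ M) \<Longrightarrow> m \<le> M \<Longrightarrow> [a = b] (mod p ^ m)"
  by (erule cong_dvd_modulus) (simp add: le_imp_power_dvd)

lemma qmod_bounds: "q > 0 \<Longrightarrow> qmod q z \<in> {0..<q} \<times> {0..<q}"
  by (simp add: qmod_def)

lemma qmod_qmod [simp]: "qmod q (qmod q z) = qmod q z"
  by (simp add: qmod_def)

lemma qcong_qmod: "qcong q (qmod q z) z"
  by (simp add: qcong_iff_qmod_eq)

lemma qmod_qmod_dvd: "r dvd q \<Longrightarrow> qmod r (qmod q z) = qmod r z"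
  by (simp add: qmod_def mod_mod_cancel)

lemma qmul_commute: "qmul D z w = qmul D w z"
  by (simp add: qmul_def algebra_simps)

lemma qmul_assoc: "qmul D (qmul D z w) v = qmul D z (qmul D w v)"
  by (simp add: qmul_def algebra_simps)

lemma qmul_one [simp]: "qmul D (1, 0) z = z" "qmul D z (1, 0) = z"
  by (simp_all add: qmul_def)

lemma qmul_scalar: "qmul D (c, 0) w = (c * fst w, c * snd w)"
  by (simp add: qmul_def)

lemma qmul_qconj: "qmul D (qconj z) z = (qnorm D z, 0)"
  by (simp add: qmul_def qconj_def qnorm_def)

lemma qpow_add: "qpow D z (m + n) = qmul D (qpow D z m) (qpow D z n)"
  by (induction m) (simp_all add: qmul_assoc)

lemma qpow_mult: "qpow D z (m * n) = qpow D (qpow D z m) n"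
  by (induction n) (simp_all add: qpow_add qmul_commute)

lemma qpow_qmul: "qpow D (qmul D z w) n = qmul D (qpow D z n) (qpow D w n)"
proof (induction n)
  case (Suc n)
  have "qmul D (qmul D z w) (qmul D (qpow D z n) (qpow D w n))
      = qmul D (qmul D z (qpow D z n)) (qmul D w (qpow D w n))"
    by (metis qmul_assoc qmul_commute)
  then show ?case using Suc by simp
qed simp

lemma qpow_scalar: "qpow D (c, 0) n = (c ^ n, 0)"
  by (induction n) (simp_all add: qmul_def)

lemma qnorm_qmul: "qnorm D (qmul D z w) = qnorm D z * qnorm D w"
  by (simp add: qnorm_def qmul_def algebra_simps)

lemma qnorm_qpow: "qnorm D (qpow D z n) = qnorm D z ^ n"
  by (induction n) (simp_all add: qnorm_qmul, simp add: qnorm_def)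

lemma qcong_qmul: "qcong q z z' \<Longrightarrow> qcong q w w' \<Longrightarrow> qcong q (qmul D z w) (qmul D z' w')"
  unfolding qcong_def qmul_def by (auto intro!: cong_add cong_mult)

lemma qcong_qpow: "qcong q z z' \<Longrightarrow> qcong q (qpow D z n) (qpow D z' n)"
  by (induction n) (simp_all add: qcong_qmul)

lemma qcong_qnorm: "[D = D'] (mod q) \<Longrightarrow> qcong q z z' \<Longrightarrow> [qnorm D z = qnorm D' z'] (mod q)"
  unfolding qcong_def qnorm_def by (auto intro!: cong_add cong_mult cong_diff)

lemma qmod_qmul: "qmod q (qmul D z (qmod q w)) = qmod q (qmul D z w)"
  "qmod q (qmul D (qmod q z) w) = qmod q (qmul D z w)"
  by (simp_all add: qcong_iff_qmod_eq[symmetric] qcong_qmul qcong_qmod)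

text \<open>The inverse of L modulo q is v times its conjugate.\<close>

lemma qcong_qpow_cancel:
  assumes v: "[qnorm D L * v = 1] (mod q)"
    and H: "qcong q (qpow D L a) (qpow D L (a + b))"
  shows "qcong q (qpow D L b) (1, 0)"
proof -
  define C where "C = qmul D (v ^ a, 0) (qpow D (qconj L) a)"
  have "qmul D C (qpow D L a) = qmul D (v ^ a, 0) (qpow D (qmul D (qconj L) L) a)"
    unfolding C_def by (simp add: qmul_assoc qpow_qmul)
  also have "\<dots> = ((qnorm D L * v) ^ a, 0)"
    by (simp add: qmul_qconj qpow_scalar qmul_scalar power_mult_distrib mult.commute)
  finally have "qcong q (qmul D C (qpow D L a)) (1, 0)"
    using cong_pow[OF v, of a] by (simp add: qcong_def)
  moreover have "qcong q (qmul D C (qpow D L a)) (qmul D (qmul D C (qpow D L a)) (qpow D L b))"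
    using H by (simp add: qcong_qmul qpow_add qmul_assoc)
  ultimately have "qcong q (qmul D (1, 0) (qpow D L b)) (1, 0)"
    by (meson qcong_qmul qcong_refl qcong_sym qcong_trans)
  then show ?thesis by simp
qed

lemma plus_minus_one_cong_eq:
  fixes e e' p :: int
  assumes "e \<in> {1, -1}" "e' \<in> {1, -1}" "[e = e'] (mod p)" "p \<ge> 3"
  shows "e = e'"
proof -
  have "\<not> p dvd 2" "\<not> p dvd -2" using zdvd_imp_le[of p 2] assms(4) by auto
  then show ?thesis using assms(1-3) by (auto simp: cong_iff_dvd_diff)
qed

lemma qnorm_cong_of_signs:
  fixes p :: int
  assumes "p \<ge> 3" "qcong p Z W"
    and "e \<in> {1, -1}" "[qnorm D Z = e] (mod p ^ M)"
    and "e' \<in> {1, -1}" "[qnorm D W = e'] (mod p ^ M)"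
  shows "[qnorm D Z = qnorm D W] (mod p ^ M)"
proof (cases "M = 0")
  case False
  have "[qnorm D Z = qnorm D W] (mod p)" using qcong_qnorm[OF cong_refl assms(2)] .
  moreover have "[qnorm D Z = e] (mod p)" "[qnorm D W = e'] (mod p)"
    using cong_power_modulus_le[OF assms(4), of 1] cong_power_modulus_le[OF assms(6), of 1] False
    by auto
  ultimately have "e = e'"
    using plus_minus_one_cong_eq[OF assms(3,5) _ assms(1)] by (meson cong_sym cong_trans)
  then show ?thesis using assms(4,6) by (meson cong_sym cong_trans)
qed simp

section \<open>Lifting congruences along powers\<close>

lemma qpow_one_plus_mod_square:
  "qcong (P ^ 2) (qpow D (1 + P * u1, P * u2) c) (1 + int c * P * u1, int c * P * u2)"
proof (induction c)
  case (Suc c)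
  let ?X = "(1 + P * u1, P * u2)"
  have "qcong (P ^ 2) (qpow D ?X (Suc c)) (qmul D ?X (1 + int c * P * u1, int c * P * u2))"
    using qcong_qmul[OF qcong_refl Suc.IH] by simp
  moreover have "qcong (P ^ 2) (qmul D ?X (1 + int c * P * u1, int c * P * u2))
      (1 + int (Suc c) * P * u1, int (Suc c) * P * u2)"
    unfolding qcong_iff_dvd_diff qmul_def fst_conv snd_conv of_nat_Suc
    by (intro conjI; algebra)
  ultimately show ?case by (rule qcong_trans)
qed simp

lemma qpow_one_plus_mod_cube:
  "qcong (P ^ 3) (qpow D (1 + P * u1, P * u2) c)
     (1 + int c * P * u1 + int (c choose 2) * P^2 * (u1^2 + D * u2^2),
      int c * P * u2 + int (c choose 2) * P^2 * (2 * u1 * u2))"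
proof (induction c)
  case (Suc c)
  let ?X = "(1 + P * u1, P * u2)"
  let ?Y = "(1 + int c * P * u1 + int (c choose 2) * P^2 * (u1^2 + D * u2^2),
             int c * P * u2 + int (c choose 2) * P^2 * (2 * u1 * u2))"
  have "qcong (P ^ 3) (qpow D ?X (Suc c)) (qmul D ?X ?Y)"
    using qcong_qmul[OF qcong_refl Suc.IH] by simp
  moreover have choose: "int (Suc c choose 2) = int (c choose 2) + int c"
    by (simp add: numeral_2_eq_2)
  have "qcong (P ^ 3) (qmul D ?X ?Y)
      (1 + int (Suc c) * P * u1 + int (Suc c choose 2) * P^2 * (u1^2 + D * u2^2),
       int (Suc c) * P * u2 + int (Suc c choose 2) * P^2 * (2 * u1 * u2))"
    unfolding qcong_iff_dvd_diff qmul_def fst_conv snd_conv choose of_nat_Suc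
    by (intro conjI; algebra)
  ultimately show ?case by (rule qcong_trans)
qed (simp add: numeral_2_eq_2)

text \<open>Since p is odd, p divides p choose 2, so the quadratic term of the binomial
  expansion vanishes modulo p^(m+2).\<close>

lemma qpow_prime_one_plus:
  fixes p :: int
  assumes "odd p" "p > 0" "m \<ge> 1"
  shows "qcong (p ^ (m + 2)) (qpow D (1 + p^m * u1, p^m * u2) (nat p))
           (1 + p^(m + 1) * u1, p^(m + 1) * u2)"
proof -
  obtain t where t: "p = 2 * t + 1" using assms(1) oddE by blast
  have "nat p = Suc (2 * nat t)" using t assms(2) by auto
  then have "nat p choose 2 = nat p * nat t"
    by (simp add: choose_two mult.left_commute[of _ 2])
  then have choose: "int (nat p choose 2) = p * t" using t assms(2) by auto
  have "p ^ (m + 2) dvd p ^ (m * 3)" using assms(3) by (intro le_imp_power_dvd) simp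
  then have "p ^ (m + 2) dvd (p ^ m) ^ 3" by (simp add: power_mult)
  then have "qcong (p ^ (m + 2)) (qpow D (1 + p^m * u1, p^m * u2) (nat p))
     (1 + int (nat p) * p^m * u1 + int (nat p choose 2) * (p^m)^2 * (u1^2 + D * u2^2),
      int (nat p) * p^m * u2 + int (nat p choose 2) * (p^m)^2 * (2 * u1 * u2))"
    using qcong_dvd_modulus[OF qpow_one_plus_mod_cube] by blast
  moreover have "qcong (p ^ (m + 2))
     (1 + int (nat p) * p^m * u1 + int (nat p choose 2) * (p^m)^2 * (u1^2 + D * u2^2),
      int (nat p) * p^m * u2 + int (nat p choose 2) * (p^m)^2 * (2 * u1 * u2))
     (1 + p^(m + 1) * u1, p^(m + 1) * u2)"
  proof -
    have "p ^ (m + 2) dvd p ^ (2 * m + 1)" using assms(3) by (intro le_imp_power_dvd) simp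
    then have dvd: "p ^ (m + 2) dvd p * (p ^ m)^2" by (simp add: power_mult mult.commute)
    have p: "int (nat p) = p" using assms(2) by simp
    have "1 + p * p^m * u1 + p * t * (p^m)^2 * (u1^2 + D * u2^2) - (1 + p^(m + 1) * u1)
        = p * (p ^ m)^2 * (t * (u1^2 + D * u2^2))"
      by (simp add: algebra_simps)
    moreover have "p * p^m * u2 + p * t * (p^m)^2 * (2 * u1 * u2) - p^(m + 1) * u2
        = p * (p ^ m)^2 * (t * (2 * u1 * u2))"
      by (simp add: algebra_simps)
    ultimately show ?thesis
      unfolding qcong_iff_dvd_diff choose p fst_conv snd_conv using dvd_mult2[OF dvd]
      by (simp only:)
  qed
  ultimately show ?thesis by (rule qcong_trans)
qed

lemma qpow_prime_power_one_plus:
  fixes p :: int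
  assumes "odd p" "p > 0" "K \<ge> 1"
  obtains U1 U2
  where "qpow D (1 + p^K * u1, p^K * u2) (nat p ^ j) = (1 + p^(K + j) * U1, p^(K + j) * U2)"
    and "[U1 = u1] (mod p)" "[U2 = u2] (mod p)"
proof (induction j arbitrary: thesis)
  case 0
  show ?case by (rule "0"[of u1 u2]) simp_all
next
  case (Suc j)
  obtain U1 U2
    where U: "qpow D (1 + p^K * u1, p^K * u2) (nat p ^ j) = (1 + p^(K + j) * U1, p^(K + j) * U2)"
    "[U1 = u1] (mod p)" "[U2 = u2] (mod p)"
    using Suc.IH by blast
  have "qpow D (1 + p^K * u1, p^K * u2) (nat p ^ Suc j)
      = qpow D (1 + p^(K + j) * U1, p^(K + j) * U2) (nat p)"
    by (simp only: power_Suc2 qpow_mult U(1))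
  moreover have "qcong (p ^ (K + j + 2)) (qpow D (1 + p^(K + j) * U1, p^(K + j) * U2) (nat p))
      (1 + p^(K + j + 1) * U1, p^(K + j + 1) * U2)"
    using qpow_prime_one_plus[OF assms(1,2)] assms(3) by simp
  ultimately have "qcong (p ^ (K + j + 2)) (qpow D (1 + p^K * u1, p^K * u2) (nat p ^ Suc j))
      (1 + p^(K + j + 1) * U1, p^(K + j + 1) * U2)"
    by simp
  then obtain a b where "qpow D (1 + p^K * u1, p^K * u2) (nat p ^ Suc j)
      = (1 + p^(K + j + 1) * U1 + p^(K + j + 2) * a, p^(K + j + 1) * U2 + p^(K + j + 2) * b)"
    by (rule qcongE)
  also have "\<dots> = (1 + p^(K + Suc j) * (U1 + p * a), p^(K + Suc j) * (U2 + p * b))"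
    by (simp add: algebra_simps)
  finally have "qpow D (1 + p^K * u1, p^K * u2) (nat p ^ Suc j)
      = (1 + p^(K + Suc j) * (U1 + p * a), p^(K + Suc j) * (U2 + p * b))" .
  moreover have "[U1 + p * a = u1] (mod p)" "[U2 + p * b = u2] (mod p)"
    using U(2,3) by (simp_all add: cong_def)
  ultimately show ?case using Suc.prems by blast
qed

lemma prime_power_dvd_twice_cancel:
  fixes p x :: int
  assumes "prime p" "p \<ge> 3" "p ^ (m + 1) dvd p ^ m * (2 * x)"
  shows "p dvd x"
proof -
  have "p dvd 2 * x" using assms(1,3) by (simp add: power_add mult.commute)
  moreover have "\<not> p dvd 2" using zdvd_imp_le[of p 2] assms(2) by auto
  ultimately show ?thesis using assms(1) by (simp add: prime_dvd_mult_iff)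
qed

lemma qnorm_perturb_cong_imp_dvd:
  fixes p D t1 t2 :: int
  assumes "prime p" "p \<ge> 3" "m \<ge> 1"
    and "[qnorm D (fst W + p^m * t1, snd W + p^m * t2) = qnorm D W] (mod p ^ (m + 1))"
  shows "p dvd fst W * t1 - D * snd W * t2"
proof (rule prime_power_dvd_twice_cancel[OF assms(1,2)])
  have "p ^ (m + 1) dvd p ^ (m + m)" using assms(3) by (intro le_imp_power_dvd) simp
  then have "p ^ (m + 1) dvd p ^ m * p ^ m * qnorm D (t1, t2)" by (simp add: power_add)
  moreover have "p ^ (m + 1) dvd qnorm D (fst W + p^m * t1, snd W + p^m * t2) - qnorm D W"
    using assms(4) by (simp add: cong_iff_dvd_diff)
  moreover have "qnorm D (fst W + p^m * t1, snd W + p^m * t2) - qnorm D W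
      = p ^ m * (2 * (fst W * t1 - D * snd W * t2)) + p ^ m * p ^ m * qnorm D (t1, t2)"
    by (simp add: qnorm_def algebra_simps)
  ultimately show "p ^ (m + 1) dvd p ^ m * (2 * (fst W * t1 - D * snd W * t2))"
    by (metis dvd_add_left_iff)
qed

text \<open>Z / W = 1 + p^m t, and the norm condition says that t has trace 0 modulo p, i.e.
  t is a multiple of sqrt D modulo p. So is U, with a coefficient prime to p, hence
  t = c U modulo p for some c.\<close>

lemma qcong_lift_one_level_linear:
  fixes p D U1 U2 :: int and Z W :: qint
  assumes p: "prime p" "p \<ge> 3" and m: "m \<ge> 1"
    and ZW: "qcong (p ^ m) Z W" "[qnorm D Z = qnorm D W] (mod p ^ (m + 1))"
    and W: "\<not> p dvd qnorm D W"
    and U: "p dvd U1" "\<not> p dvd U2"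
  obtains c :: nat where "qcong (p ^ (m + 1)) Z (qmul D W (1 + int c * p^m * U1, int c * p^m * U2))"
proof -
  obtain w1 w2 where w: "W = (w1, w2)" by fastforce
  obtain t1 t2 where Z: "Z = (w1 + p^m * t1, w2 + p^m * t2)"
    using qcongE[OF ZW(1)[unfolded w]] by blast
  obtain b where b: "w1 * t1 - D * w2 * t2 = p * b"
    using qnorm_perturb_cong_imp_dvd[OF p m, of D "(w1, w2)" t1 t2] ZW(2) Z w by auto
  have "coprime U2 p" using prime_imp_coprime[OF p(1) U(2)] by (simp add: coprime_commute)
  then obtain v g where g: "U2 * v = 1 + p * g"
    using cong_solve_coprime_int by (metis cong_iff_lin cong_sym)
  have "coprime (qnorm D W) p" using prime_imp_coprime[OF p(1) W] by (simp add: coprime_commute)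
  then obtain n h where h: "(w1 * w1 - D * (w2 * w2)) * n = 1 + p * h"
    using cong_solve_coprime_int w unfolding qnorm_def
    by (metis cong_iff_lin cong_sym fst_conv snd_conv)
  define c where "c = nat ((n * (w1 * t2 - w2 * t1) * v) mod p)"
  have "[n * (w1 * t2 - w2 * t1) * v = int c] (mod p)"
    unfolding c_def using p by (simp add: cong_def)
  then obtain r where r: "int c = n * (w1 * t2 - w2 * t1) * v + p * r"
    unfolding cong_iff_lin by blast
  obtain a1 where a1: "U1 = p * a1" using U(1) by auto
  have k1: "p dvd t1 - int c * (w1 * U1 + D * w2 * U2)" using a1 b r g h by algebra
  have k2: "p dvd t2 - int c * (w1 * U2 + w2 * U1)" using a1 b r g h by algebra
  have "fst Z - fst (qmul D W (1 + int c * p^m * U1, int c * p^m * U2))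
      = p ^ m * (t1 - int c * (w1 * U1 + D * w2 * U2))"
    "snd Z - snd (qmul D W (1 + int c * p^m * U1, int c * p^m * U2))
      = p ^ m * (t2 - int c * (w1 * U2 + w2 * U1))"
    unfolding Z w qmul_def by (simp_all add: algebra_simps)
  then have "qcong (p ^ (m + 1)) Z (qmul D W (1 + int c * p^m * U1, int c * p^m * U2))"
    using k1 k2 unfolding qcong_iff_dvd_diff by (simp add: mult_dvd_mono)
  then show ?thesis by (rule that)
qed

lemma qcong_lift_one_level:
  fixes p D U1 U2 :: int and Z W :: qint
  assumes "prime p" "p \<ge> 3" "m \<ge> 1"
    and "qcong (p ^ m) Z W" "[qnorm D Z = qnorm D W] (mod p ^ (m + 1))"
    and "\<not> p dvd qnorm D W"
    and "p dvd U1" "\<not> p dvd U2"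
  obtains c where "qcong (p ^ (m + 1)) Z (qmul D W (qpow D (1 + p^m * U1, p^m * U2) c))"
proof -
  obtain c where "qcong (p ^ (m + 1)) Z (qmul D W (1 + int c * p^m * U1, int c * p^m * U2))"
    using qcong_lift_one_level_linear[OF assms] .
  moreover have "p ^ (m + 1) dvd p ^ (m * 2)" using assms(3) by (intro le_imp_power_dvd) simp
  then have "p ^ (m + 1) dvd (p ^ m) ^ 2" by (simp add: power_mult)
  then have "qcong (p ^ (m + 1)) (qpow D (1 + p^m * U1, p^m * U2) c)
      (1 + int c * p^m * U1, int c * p^m * U2)"
    using qcong_dvd_modulus[OF qpow_one_plus_mod_square] by blast
  ultimately show ?thesis
    using that qcong_qmul[OF qcong_refl] qcong_sym qcong_trans by meson
qed

lemma sign_power: "(e::int) \<in> {1, -1} \<Longrightarrow> e ^ n \<in> {1, -1}"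
  by (induction n) auto

lemma not_dvd_of_cong_sign:
  fixes p :: int
  assumes "p \<ge> 3" "e \<in> {1, -1}" "[a = e] (mod p)"
  shows "\<not> p dvd a"
  using assms zdvd_imp_le[of p 1] by (auto simp: cong_dvd_iff)

lemma qcong_lift_along_powers:
  fixes p D u1 u2 :: int and Z W :: qint
  assumes p: "prime p" "p \<ge> 3" and K: "1 \<le> K" "K + j \<le> M"
    and u: "p dvd u1" "\<not> p dvd u2" "[qnorm D (1 + p^K * u1, p^K * u2) = 1] (mod p ^ M)"
    and W: "e \<in> {1, -1}" "[qnorm D W = e] (mod p ^ M)"
    and Z: "e' \<in> {1, -1}" "[qnorm D Z = e'] (mod p ^ M)" "qcong (p ^ K) Z W"
  shows "\<exists>a. qcong (p ^ (K + j)) Z (qmul D W (qpow D (1 + p^K * u1, p^K * u2) a))"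
  using K(2)
proof (induction j)
  case 0
  then show ?case using Z(3) by (intro exI[of _ 0]) simp
next
  case (Suc j)
  define \<mu> where "\<mu> = (1 + p^K * u1, p^K * u2)"
  define m where "m = K + j"
  have m: "1 \<le> m" "m + 1 \<le> M" using K Suc.prems unfolding m_def by auto
  obtain a where a: "qcong (p ^ m) Z (qmul D W (qpow D \<mu> a))"
    using Suc unfolding m_def \<mu>_def by auto
  define W' where "W' = qmul D W (qpow D \<mu> a)"
  have W': "[qnorm D W' = e] (mod p ^ M)"
    using cong_mult[OF W(2) cong_pow[OF u(3), of a]]
    unfolding W'_def \<mu>_def by (simp add: qnorm_qmul qnorm_qpow)
  have "qcong p Z W'" using qcong_power_modulus_le[of p m Z W' 1] a m unfolding W'_def by simp
  then have "[qnorm D Z = qnorm D W'] (mod p ^ M)"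
    using qnorm_cong_of_signs[OF p(2) _ Z(1,2) W(1) W'] by blast
  then have norm: "[qnorm D Z = qnorm D W'] (mod p ^ (m + 1))"
    using cong_power_modulus_le m(2) by blast
  have "\<not> p dvd qnorm D W'"
    using not_dvd_of_cong_sign[OF p(2) W(1)] cong_power_modulus_le[OF W', of 1] m by simp
  moreover have "odd p" "p > 0" using p prime_odd_int prime_gt_0_int by auto
  then obtain U1 U2 where U: "qpow D \<mu> (nat p ^ j) = (1 + p^m * U1, p^m * U2)"
    "[U1 = u1] (mod p)" "[U2 = u2] (mod p)"
    using qpow_prime_power_one_plus[of p K D u1 u2 j] K(1) unfolding \<mu>_def m_def by blast
  moreover have "p dvd U1" "\<not> p dvd U2" using U(2,3) u(1,2) by (simp_all add: cong_dvd_iff)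
  ultimately obtain c where
    "qcong (p ^ (m + 1)) Z (qmul D W' (qpow D (1 + p^m * U1, p^m * U2) c))"
    using qcong_lift_one_level[OF p m(1) a[folded W'_def] norm] by blast
  moreover have "qmul D W' (qpow D (1 + p^m * U1, p^m * U2) c)
      = qmul D W (qpow D \<mu> (a + nat p ^ j * c))"
    unfolding W'_def U(1)[symmetric] by (simp add: qpow_add qpow_mult qmul_assoc)
  ultimately show ?case unfolding m_def \<mu>_def by auto
qed

text \<open>Write L^l = 1 + p^K u. The norm of L^l forces p to divide u1, and the exactness
  of K gives that p does not divide u2.\<close>

lemma qcong_qpow_lift:
  fixes p D :: int and L Z :: qint
  assumes p: "prime p" "p \<ge> 3" and K: "1 \<le> K" "K < M"
    and l: "qcong (p ^ K) (qpow D L l) (1, 0)" "\<not> qcong (p ^ Suc K) (qpow D L l) (1, 0)"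
    and L: "e \<in> {1, -1}" "[qnorm D L = e] (mod p ^ M)"
    and Z: "e' \<in> {1, -1}" "[qnorm D Z = e'] (mod p ^ M)" "qcong (p ^ K) Z (qpow D L i)"
  obtains n where "qcong (p ^ M) Z (qpow D L n)"
proof -
  obtain u1 u2 where \<mu>: "qpow D L l = (1 + p^K * u1, p^K * u2)"
    using qcongE[OF l(1)] by (metis add_0)
  have "qcong p (qpow D L l) (1, 0)" using qcong_power_modulus_le[OF l(1), of 1] K by simp
  moreover have "[qnorm D (qpow D L l) = e ^ l] (mod p ^ M)"
    unfolding qnorm_qpow using L(2) by (rule cong_pow)
  ultimately have N: "[qnorm D (qpow D L l) = 1] (mod p ^ M)"
    using qnorm_cong_of_signs[OF p(2), of "qpow D L l" "(1, 0)" "e ^ l" D M 1] sign_power[OF L(1)]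
    by (simp add: qnorm_def)
  have "qnorm D (1, 0) = 1" by (simp add: qnorm_def)
  then have "[qnorm D (1 + p^K * u1, p^K * u2) = qnorm D (1, 0)] (mod p ^ (K + 1))"
    using cong_power_modulus_le[OF N, of "K + 1"] \<mu> K(2) by simp
  then have u1: "p dvd u1" using qnorm_perturb_cong_imp_dvd[OF p K(1), of D "(1, 0)" u1 u2] by simp
  have u2: "\<not> p dvd u2"
  proof
    assume "p dvd u2"
    with u1 have "qcong (p ^ Suc K) (qpow D L l) (1, 0)"
      unfolding \<mu> qcong_iff_dvd_diff by (simp add: mult_dvd_mono)
    then show False using l(2) by blast
  qed
  have "[qnorm D (qpow D L i) = e ^ i] (mod p ^ M)" unfolding qnorm_qpow using L(2) by (rule cong_pow)
  then obtain a where "qcong (p ^ (K + (M - K))) Z (qmul D (qpow D L i) (qpow D (qpow D L l) a))"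
    using qcong_lift_along_powers[OF p K(1) _ u1 u2 N[unfolded \<mu>] sign_power[OF L(1)] _ Z, of "M - K"]
      K(2) \<mu> by auto
  moreover have "qmul D (qpow D L i) (qpow D (qpow D L l) a) = qpow D L (i + l * a)"
    by (simp add: qpow_add qpow_mult)
  ultimately show ?thesis using that K(2) by simp
qed

section \<open>Residues of p-adic integers\<close>

lemma Zp_mod_eq: "x \<in> Zp p \<Longrightarrow> x n mod p ^ n = x n"
  unfolding Zp_def by (simp add: mod_pos_pos_trivial)

lemma Zp_cong_Suc: "x \<in> Zp p \<Longrightarrow> [x (Suc n) = x n] (mod p ^ n)"
  unfolding Zp_def cong_def by (simp add: Zp_mod_eq)

lemma Zp_coherent:
  assumes "x \<in> Zp p" "j \<le> M"
  shows "x j = x M mod p ^ j"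
  using assms(2)
proof (induction M)
  case 0
  then show ?case using Zp_mod_eq[OF assms(1), of 0] by simp
next
  case (Suc M)
  show ?case
  proof (cases "j = Suc M")
    case True
    then show ?thesis using Zp_mod_eq[OF assms(1)] by metis
  next
    case False
    then have "j \<le> M" using Suc by simp
    then have "x j = x M mod p ^ j" using Suc by simp
    also have "x M = x (Suc M) mod p ^ M" using assms(1) unfolding Zp_def by simp
    also have "(x (Suc M) mod p ^ M) mod p ^ j = x (Suc M) mod p ^ j"
      using \<open>j \<le> M\<close> by (simp add: le_imp_power_dvd mod_mod_cancel)
    finally show ?thesis .
  qed
qed

lemma Zp_of_coherent:
  assumes "\<And>n. [g (Suc n) = g n] (mod p ^ n)" "p > 0"
  shows "(\<lambda>n. g n mod p ^ n) \<in> Zp p"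
  unfolding Zp_def
proof safe
  fix n
  show "0 \<le> g n mod p ^ n" "g n mod p ^ n < p ^ n" using assms(2) by simp_all
  have "g (Suc n) mod p ^ Suc n mod p ^ n = g (Suc n) mod p ^ n"
    by (simp add: mod_mod_cancel)
  also have "\<dots> = g n mod p ^ n" using assms(1) by (simp add: cong_def)
  finally show "g (Suc n) mod p ^ Suc n mod p ^ n = g n mod p ^ n" .
qed

lemma Zp_add: "x \<in> Zp p \<Longrightarrow> y \<in> Zp p \<Longrightarrow> p > 0 \<Longrightarrow> zp_add p x y \<in> Zp p"
  unfolding zp_add_def by (rule Zp_of_coherent) (auto intro: cong_add Zp_cong_Suc)

lemma Zp_mul: "x \<in> Zp p \<Longrightarrow> y \<in> Zp p \<Longrightarrow> p > 0 \<Longrightarrow> zp_mul p x y \<in> Zp p"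
  unfolding zp_mul_def by (rule Zp_of_coherent) (auto intro: cong_mult Zp_cong_Suc)

lemma Zp_neg: "x \<in> Zp p \<Longrightarrow> p > 0 \<Longrightarrow> zp_neg p x \<in> Zp p"
  unfolding zp_neg_def
  by (rule Zp_of_coherent) (auto intro: cong_minus_minus_iff[THEN iffD2] Zp_cong_Suc)

lemma Zp_of_int: "p > 0 \<Longrightarrow> zp_of_int p a \<in> Zp p"
  unfolding zp_of_int_def by (rule Zp_of_coherent) auto

lemma Zpd_add: "z \<in> Zpd p \<Longrightarrow> w \<in> Zpd p \<Longrightarrow> p > 0 \<Longrightarrow> zpd_add p z w \<in> Zpd p"
  unfolding Zpd_def zpd_add_def by (auto intro!: Zp_add)

lemma Zpd_sub: "z \<in> Zpd p \<Longrightarrow> w \<in> Zpd p \<Longrightarrow> p > 0 \<Longrightarrow> zpd_sub p z w \<in> Zpd p"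
  unfolding Zpd_def zpd_sub_def by (auto intro!: Zp_add Zp_neg)

lemma Zpd_mul: "z \<in> Zpd p \<Longrightarrow> w \<in> Zpd p \<Longrightarrow> d \<in> Zp p \<Longrightarrow> p > 0 \<Longrightarrow> zpd_mul p d z w \<in> Zpd p"
  unfolding Zpd_def zpd_mul_def by (auto intro!: Zp_add Zp_mul)

lemma Zpd_one: "p > 0 \<Longrightarrow> zpd_one p \<in> Zpd p"
  unfolding Zpd_def zpd_one_def by (auto intro!: Zp_of_int)

lemma Zpd_pow: "z \<in> Zpd p \<Longrightarrow> d \<in> Zp p \<Longrightarrow> p > 0 \<Longrightarrow> zpd_pow p d z n \<in> Zpd p"
  by (induction n) (auto intro!: Zpd_mul Zpd_one)

definition zpd_res :: "nat \<Rightarrow> zpd \<Rightarrow> qint" where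
  "zpd_res m z = (fst z m, snd z m)"

lemma zpd_eqI: "(\<And>m. zpd_res m z = zpd_res m w) \<Longrightarrow> z = w"
  unfolding zpd_res_def by (auto simp: prod_eq_iff fun_eq_iff)

lemma qmod_zpd_res: "z \<in> Zpd p \<Longrightarrow> qmod (p ^ m) (zpd_res m z) = zpd_res m z"
  unfolding Zpd_def zpd_res_def qmod_def by (auto simp: Zp_mod_eq)

lemma zpd_res_bounds: "p > 0 \<Longrightarrow> z \<in> Zpd p \<Longrightarrow> zpd_res m z \<in> {0..<p ^ m} \<times> {0..<p ^ m}"
  using qmod_bounds[of "p ^ m" "zpd_res m z"] by (simp add: qmod_zpd_res)

lemma zpd_res_coherent: "z \<in> Zpd p \<Longrightarrow> j \<le> M \<Longrightarrow> zpd_res j z = qmod (p ^ j) (zpd_res M z)"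
  unfolding Zpd_def zpd_res_def qmod_def using Zp_coherent by auto

lemma zpd_res_eq_le:
  "z \<in> Zpd p \<Longrightarrow> w \<in> Zpd p \<Longrightarrow> j \<le> M \<Longrightarrow> zpd_res M z = zpd_res M w \<Longrightarrow> zpd_res j z = zpd_res j w"
  using zpd_res_coherent by metis

lemma zpd_res_0: "z \<in> Zpd p \<Longrightarrow> zpd_res 0 z = (0, 0)"
  using qmod_zpd_res[of z p 0] by (simp add: qmod_def)

lemma zpd_res_add:
  "zpd_res m (zpd_add p z w) = qmod (p ^ m)
     (fst (zpd_res m z) + fst (zpd_res m w), snd (zpd_res m z) + snd (zpd_res m w))"
  unfolding zpd_res_def zpd_add_def qmod_def zp_add_def by simp

lemma zpd_res_sub:
  "zpd_res m (zpd_sub p z w) = qmod (p ^ m)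
     (fst (zpd_res m z) - fst (zpd_res m w), snd (zpd_res m z) - snd (zpd_res m w))"
  unfolding zpd_res_def zpd_sub_def qmod_def zp_add_def zp_neg_def by (simp add: mod_simps)

lemma zpd_res_mul:
  "zpd_res m (zpd_mul p d z w) = qmod (p ^ m) (qmul (d m) (zpd_res m z) (zpd_res m w))"
  unfolding zpd_res_def zpd_mul_def qmod_def qmul_def zp_add_def zp_mul_def
  by (simp add: mod_simps algebra_simps)

lemma zpd_res_one: "zpd_res m (zpd_one p) = qmod (p ^ m) (1, 0)"
  unfolding zpd_res_def zpd_one_def qmod_def zp_of_int_def by simp

lemma zpd_res_pow: "zpd_res m (zpd_pow p d z n) = qmod (p ^ m) (qpow (d m) (zpd_res m z) n)"
  by (induction n) (simp_all add: zpd_res_one zpd_res_mul qmod_qmul)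

lemma zpd_norm_res: "zpd_norm p d z m = qnorm (d m) (zpd_res m z) mod p ^ m"
  unfolding zpd_norm_def zpd_res_def qnorm_def zp_add_def zp_mul_def zp_neg_def
  by (simp add: mod_simps algebra_simps)

lemma zpd_sub_in_pk_ideal_iff:
  assumes "a \<in> Zpd p" "b \<in> Zpd p" "p > 0"
  shows "zpd_sub p a b \<in> pk_ideal p k \<longleftrightarrow> (\<forall>j. enat j \<le> k \<longrightarrow> zpd_res j a = zpd_res j b)"
proof -
  have "zpd_res j (zpd_sub p a b) = (0, 0) \<longleftrightarrow> zpd_res j a = zpd_res j b" for j
    using qmod_zpd_res[OF assms(1), of j] qmod_zpd_res[OF assms(2), of j]
    unfolding zpd_res_sub qmod_def
    by (metis fst_conv snd_conv mod_eq_dvd_iff dvd_eq_mod_eq_0 prod.collapse prod.inject)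
  then show ?thesis
    unfolding pk_ideal_def using Zpd_sub[OF assms] by (auto simp: zpd_res_def)
qed

lemma zpd_coset_iff:
  assumes "a \<in> Zpd p" "p > 0"
  shows "z \<in> zpd_coset p a k \<longleftrightarrow> z \<in> Zpd p \<and> (\<forall>j. enat j \<le> k \<longrightarrow> zpd_res j z = zpd_res j a)"
proof
  assume "z \<in> zpd_coset p a k"
  then obtain w where w: "w \<in> pk_ideal p k" "z = zpd_add p a w" unfolding zpd_coset_def by auto
  have "w \<in> Zpd p" using w(1) unfolding pk_ideal_def by auto
  moreover have "zpd_res j z = zpd_res j a" if "enat j \<le> k" for j
  proof -
    have "zpd_res j w = (0, 0)" using w(1) that unfolding pk_ideal_def zpd_res_def by auto
    then show ?thesis
      unfolding w(2) zpd_res_add using qmod_zpd_res[OF assms(1)] by simp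
  qed
  ultimately show "z \<in> Zpd p \<and> (\<forall>j. enat j \<le> k \<longrightarrow> zpd_res j z = zpd_res j a)"
    using w(2) Zpd_add[OF assms(1) _ assms(2)] by auto
next
  assume z: "z \<in> Zpd p \<and> (\<forall>j. enat j \<le> k \<longrightarrow> zpd_res j z = zpd_res j a)"
  then have "zpd_sub p z a \<in> pk_ideal p k"
    using zpd_sub_in_pk_ideal_iff[OF _ assms] by blast
  moreover have "zpd_add p a (zpd_sub p z a) = z"
  proof (rule zpd_eqI)
    fix m
    show "zpd_res m (zpd_add p a (zpd_sub p z a)) = zpd_res m z"
      using qmod_zpd_res[of z p m] z
      unfolding zpd_res_add zpd_res_sub qmod_def by (simp add: mod_add_right_eq)
  qed
  ultimately show "z \<in> zpd_coset p a k" unfolding zpd_coset_def by (metis image_eqI)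
qed

lemma pk_ideal_antimono: "w \<in> pk_ideal p k \<Longrightarrow> k' \<le> k \<Longrightarrow> w \<in> pk_ideal p k'"
  unfolding pk_ideal_def by auto

lemma pk_ideal_iff_le_nu:
  assumes "w \<in> Zpd p"
  shows "w \<in> pk_ideal p (enat j) \<longleftrightarrow> enat j \<le> nu p w"
proof
  assume "w \<in> pk_ideal p (enat j)"
  then show "enat j \<le> nu p w" unfolding nu_def by (auto intro: Sup_upper)
next
  assume j: "enat j \<le> nu p w"
  show "w \<in> pk_ideal p (enat j)"
  proof (cases j)
    case 0
    then show ?thesis
      using assms zpd_res_0[OF assms] unfolding pk_ideal_def zpd_res_def by (auto simp: zero_enat_def)
  next
    case (Suc i)
    then have "enat i < Sup {enat j | j. w \<in> pk_ideal p (enat j)}"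
      using j unfolding nu_def by (simp add: Suc_ile_eq)
    then obtain j' where "i < j'" "w \<in> pk_ideal p (enat j')" by (auto simp: less_Sup_iff)
    then show ?thesis using Suc pk_ideal_antimono by fastforce
  qed
qed

lemma zp_neg_one: "zp_neg p (zp_of_int p 1) = zp_of_int p (-1)"
  by (simp add: fun_eq_iff zp_neg_def zp_of_int_def mod_simps)

lemma zpd_norm_eq_zp_of_int_iff:
  "zpd_norm p d z = zp_of_int p e \<longleftrightarrow> (\<forall>M. [qnorm (d M) (zpd_res M z) = e] (mod p ^ M))"
  by (simp add: fun_eq_iff zpd_norm_res zp_of_int_def cong_def)

lemma zpd_inverse_of_sign_norm:
  assumes "p > 0" "d \<in> Zp p" "z \<in> Zpd p" "e \<in> {1, -1}"
    and "\<And>M. [qnorm (d M) (zpd_res M z) = e] (mod p ^ M)"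
  shows "\<exists>w\<in>Zpd p. zpd_mul p d z w = zpd_one p"
proof -
  define w where "w = ((\<lambda>n. (e * fst z n) mod p ^ n), (\<lambda>n. (- e * snd z n) mod p ^ n))"
  have z: "fst z \<in> Zp p" "snd z \<in> Zp p" using assms(3) by (auto simp: Zpd_def)
  have "(\<lambda>n. (e * fst z n) mod p ^ n) \<in> Zp p" "(\<lambda>n. (- e * snd z n) mod p ^ n) \<in> Zp p"
    by (rule Zp_of_coherent[OF cong_mult[OF cong_refl Zp_cong_Suc] assms(1)], fact z)+
  then have w: "w \<in> Zpd p" unfolding w_def Zpd_def by simp
  have "zpd_mul p d z w = zpd_one p"
  proof (rule zpd_eqI)
    fix m
    have "zpd_res m w = qmod (p ^ m) (e * fst (zpd_res m z), - e * snd (zpd_res m z))"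
      by (simp add: w_def zpd_res_def qmod_def)
    then have "zpd_res m (zpd_mul p d z w)
        = qmod (p ^ m) (qmul (d m) (zpd_res m z) (e * fst (zpd_res m z), - e * snd (zpd_res m z)))"
      by (simp add: zpd_res_mul qmod_qmul)
    also have "qmul (d m) (zpd_res m z) (e * fst (zpd_res m z), - e * snd (zpd_res m z))
        = (e * qnorm (d m) (zpd_res m z), 0)"
      by (simp add: qmul_def qnorm_def algebra_simps)
    also have "qmod (p ^ m) (e * qnorm (d m) (zpd_res m z), 0) = qmod (p ^ m) (1, 0)"
    proof -
      have "[e * qnorm (d m) (zpd_res m z) = e * e] (mod p ^ m)" using assms(5) by (auto intro: cong_mult)
      moreover have "e * e = 1" using assms(4) by auto
      ultimately show ?thesis by (simp add: qmod_def cong_def)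
    qed
    finally show "zpd_res m (zpd_mul p d z w) = zpd_res m (zpd_one p)" by (simp add: zpd_res_one)
  qed
  then show ?thesis using w by blast
qed

lemma U0_iff:
  assumes "p > 0" "d \<in> Zp p"
  shows "z \<in> U0 p d \<longleftrightarrow>
    z \<in> Zpd p \<and> (\<exists>e\<in>{1, -1}. \<forall>M. [qnorm (d M) (zpd_res M z) = e] (mod p ^ M))"
  using zpd_inverse_of_sign_norm[OF assms]
  unfolding U0_def zp_neg_one zpd_norm_eq_zp_of_int_iff by blast

lemma U0_Zpd: "z \<in> U0 p d \<Longrightarrow> z \<in> Zpd p"
  unfolding U0_def by blast

lemma U0_closed:
  assumes "p \<ge> 3" "d \<in> Zp p" "z \<in> Zpd p" "\<And>M. \<exists>w\<in>U0 p d. zpd_res M w = zpd_res M z"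
  shows "z \<in> U0 p d"
proof -
  have p: "p > 0" using assms(1) by simp
  have "\<exists>e\<in>{1, -1}. [qnorm (d M) (zpd_res M z) = e] (mod p ^ M)" for M
    using assms(4)[of M] U0_iff[OF p assms(2)] by metis
  then obtain E where E: "\<And>M. E M \<in> {1, -1}" "\<And>M. [qnorm (d M) (zpd_res M z) = E M] (mod p ^ M)"
    by metis
  have "[qnorm (d M) (zpd_res M z) = E 1] (mod p ^ M)" for M
  proof (cases "M = 0")
    case False
    have "[d 1 = d M] (mod p)" using Zp_coherent[OF assms(2), of 1 M] False by (simp add: cong_def)
    moreover have "qcong p (zpd_res 1 z) (zpd_res M z)"
      using zpd_res_coherent[OF assms(3), of 1 M] False by (simp add: qcong_iff_qmod_eq)
    ultimately have "[qnorm (d 1) (zpd_res 1 z) = qnorm (d M) (zpd_res M z)] (mod p)"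
      by (rule qcong_qnorm)
    moreover have "[qnorm (d M) (zpd_res M z) = E M] (mod p)"
      using cong_power_modulus_le[OF E(2)[of M], of 1] False by simp
    ultimately have "[E M = E 1] (mod p)" using E(2)[of 1] by (metis cong_sym cong_trans power_one_right)
    then show ?thesis using plus_minus_one_cong_eq[OF E(1,1) _ assms(1)] E(2) by metis
  qed simp
  then show ?thesis using U0_iff[OF p assms(2)] assms(3) E(1) by blast
qed

lemma zpd_pow_in_U0:
  assumes "p > 0" "d \<in> Zp p" "z \<in> U0 p d"
  shows "zpd_pow p d z n \<in> U0 p d"
proof -
  obtain e where e: "e \<in> {1, -1}" "\<And>M. [qnorm (d M) (zpd_res M z) = e] (mod p ^ M)"
    using assms(3) U0_iff[OF assms(1,2)] by blast
  have "[qnorm (d M) (zpd_res M (zpd_pow p d z n)) = e ^ n] (mod p ^ M)" for M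
  proof -
    have "[qnorm (d M) (zpd_res M (zpd_pow p d z n))
        = qnorm (d M) (qpow (d M) (zpd_res M z) n)] (mod p ^ M)"
      unfolding zpd_res_pow by (intro qcong_qnorm cong_refl qcong_qmod)
    then show ?thesis unfolding qnorm_qpow using cong_pow[OF e(2)] by (rule cong_trans)
  qed
  then show ?thesis
    using U0_iff[OF assms(1,2)] Zpd_pow[OF U0_Zpd[OF assms(3)] assms(2,1)] sign_power[OF e(1)]
    by blast
qed

section \<open>Points of the norm conics modulo p\<close>

definition norm_class :: "int \<Rightarrow> int \<Rightarrow> int \<Rightarrow> qint set" where
  "norm_class p D e = {z \<in> {0..<p} \<times> {0..<p}. [qnorm D z = e] (mod p)}"

lemma zpd_res_U0_in_norm_class:
  assumes "p > 0" "d \<in> Zp p" "w \<in> U0 p d"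
  shows "zpd_res 1 w \<in> norm_class p (d 1) 1 \<union> norm_class p (d 1) (-1)"
proof -
  obtain e where e: "e \<in> {1, -1}" "[qnorm (d 1) (zpd_res 1 w) = e] (mod p)"
    using assms(3) U0_iff[OF assms(1,2)] by (metis power_one_right)
  have "zpd_res 1 w \<in> {0..<p} \<times> {0..<p}"
    using zpd_res_bounds[OF assms(1) U0_Zpd[OF assms(3)], of 1] by simp
  then show ?thesis using e unfolding norm_class_def by auto
qed

lemma norm_class_bounds:
  "z \<in> norm_class p D e \<Longrightarrow> 0 \<le> fst z \<and> fst z < p \<and> 0 \<le> snd z \<and> snd z < p"
  unfolding norm_class_def by (auto simp: mem_Times_iff)

lemma norm_class_dvd: "z \<in> norm_class p D e \<Longrightarrow> p dvd fst z * fst z - D * (snd z * snd z) - e"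
  unfolding norm_class_def qnorm_def by (simp add: cong_iff_dvd_diff)

lemma norm_class_not_dvd_snd:
  assumes "z \<in> norm_class p D e" "snd z \<noteq> 0"
  shows "\<not> p dvd snd z"
  using norm_class_bounds[OF assms(1)] zdvd_not_zless[of "snd z" p] assms(2) by auto

lemma finite_norm_class: "finite (norm_class p D e)"
  unfolding norm_class_def by simp

lemma inj_on_qmul_norm_minus_one:
  assumes n0: "[qnorm D z0 = -1] (mod p)"
  shows "inj_on (\<lambda>z. qmod p (qmul D z z0)) (norm_class p D e)"
proof (rule inj_onI)
  fix z z' assume z: "z \<in> norm_class p D e" and z': "z' \<in> norm_class p D e"
    and "qmod p (qmul D z z0) = qmod p (qmul D z' z0)"
  then have "qcong p (qmul D z z0) (qmul D z' z0)" by (simp add: qcong_iff_qmod_eq)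
  then have "qcong p (qmul D (qmul D z z0) (qconj z0)) (qmul D (qmul D z' z0) (qconj z0))"
    by (rule qcong_qmul[OF _ qcong_refl])
  moreover have conj: "qmul D (qmul D w z0) (qconj z0) = (qnorm D z0 * fst w, qnorm D z0 * snd w)"
    for w by (simp add: qmul_def qconj_def qnorm_def algebra_simps)
  ultimately have "qcong p (qnorm D z0 * fst z, qnorm D z0 * snd z)
      (qnorm D z0 * fst z', qnorm D z0 * snd z')"
    by (simp only: conj)
  moreover have neg: "qcong p (qnorm D z0 * fst w, qnorm D z0 * snd w) (- fst w, - snd w)" for w
    using cong_mult[OF n0 cong_refl] unfolding qcong_def by simp
  ultimately have "qcong p (- fst z, - snd z) (- fst z', - snd z')"
    using qcong_trans[OF qcong_trans[OF qcong_sym[OF neg] _] neg] by blast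
  then have "qcong p z z'" by (simp add: qcong_def cong_minus_minus_iff)
  then show "z = z'"
    using cong_less_imp_eq_int[of "fst z" p "fst z'"] cong_less_imp_eq_int[of "snd z" p "snd z'"]
      norm_class_bounds[OF z] norm_class_bounds[OF z']
    unfolding qcong_def by (simp add: prod_eq_iff)
qed

locale quadratic_nonresidue =
  fixes p D :: int
  assumes prime: "prime p" and p_ge_3: "p \<ge> 3" and nonresidue: "\<And>x. \<not> [x * x = D] (mod p)"
begin

text \<open>A point (x, y) of the conic x^2 - D y^2 = 1 over F_p with y \<noteq> 0 is determined by
  the parameter t = (1 + x) / y of the line joining it to (-1, 0). The two points with
  y = 0, namely (1, 0) and (-1, 0), are sent to 0 and p, values no other point takes.\<close>

definition slope :: "qint \<Rightarrow> int" where
  "slope z = (if snd z = 0 then (if fst z = 1 then 0 else p)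
              else (1 + fst z) * modular_inverse p (snd z) mod p)"

lemma p_pos: "p > 0"
  using p_ge_3 by simp

lemma not_dvd_sq_minus: "\<not> p dvd t * t - D"
  using nonresidue[of t] by (simp add: cong_iff_dvd_diff)

lemma slope_cong:
  assumes "z \<in> norm_class p D e" "snd z \<noteq> 0"
  shows "[slope z * snd z = 1 + fst z] (mod p)"
proof -
  have "coprime (snd z) p"
    using prime_imp_coprime[OF prime norm_class_not_dvd_snd[OF assms]] by (simp add: coprime_commute)
  then have "[(1 + fst z) * (modular_inverse p (snd z) * snd z) = (1 + fst z) * 1] (mod p)"
    by (intro cong_mult cong_refl cong_modular_inverse2)
  then show ?thesis
    using assms(2) unfolding slope_def by (simp add: cong_def mod_simps mult.assoc)
qed

lemma slope_nonzero:
  assumes "z \<in> norm_class p D 1" "snd z \<noteq> 0"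
  shows "slope z \<noteq> 0"
proof
  assume "slope z = 0"
  then have "[1 + fst z = 0] (mod p)" using slope_cong[OF assms] by (simp add: cong_sym_eq)
  then have "p dvd 1 + fst z" by (simp add: cong_0_iff)
  then have "p dvd D * (snd z * snd z)" using norm_class_dvd[OF assms(1)] by algebra
  moreover have "\<not> p dvd D" using not_dvd_sq_minus[of 0] by simp
  ultimately show False
    using norm_class_not_dvd_snd[OF assms] prime by (simp add: prime_dvd_mult_iff)
qed

lemma norm_class_one_snd_0:
  assumes "z \<in> norm_class p D 1" "snd z = 0"
  shows "fst z = 1 \<or> fst z = p - 1"
proof -
  have "p dvd (fst z - 1) * (fst z + 1)"
    using norm_class_dvd[OF assms(1)] assms(2) by (simp add: algebra_simps)
  then have "p dvd fst z - 1 \<or> p dvd fst z + 1" using prime by (simp add: prime_dvd_mult_iff)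
  moreover have "[fst z = p - 1] (mod p)" if "p dvd fst z + 1"
  proof -
    have "[fst z = -1] (mod p)" using that by (simp add: cong_iff_dvd_diff)
    moreover have "[-1 = p - 1] (mod p)" by (simp add: cong_iff_dvd_diff)
    ultimately show ?thesis by (rule cong_trans)
  qed
  ultimately have "[fst z = 1] (mod p) \<or> [fst z = p - 1] (mod p)" by (auto simp: cong_iff_dvd_diff)
  then show ?thesis
    using norm_class_bounds[OF assms(1)] p_ge_3 cong_less_imp_eq_int[of "fst z" p] by auto
qed

text \<open>Eliminating x from x^2 - D y^2 = 1 and t y = 1 + x gives (t^2 - D) y = 2 t, which
  recovers y, and then x, from t since D is not a square.\<close>

lemma slope_conic:
  assumes "z \<in> norm_class p D 1" "snd z \<noteq> 0"
  shows "p dvd (slope z * slope z - D) * snd z - 2 * slope z"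
proof -
  have "p dvd slope z * snd z - (1 + fst z)" using slope_cong[OF assms] by (simp add: cong_iff_dvd_diff)
  then have "p dvd snd z * ((slope z * slope z - D) * snd z - 2 * slope z)"
    using norm_class_dvd[OF assms(1)] by algebra
  then show ?thesis using norm_class_not_dvd_snd[OF assms] prime by (simp add: prime_dvd_mult_iff)
qed

lemma slope_range: "z \<in> norm_class p D 1 \<Longrightarrow> slope z \<in> {0..p}"
  unfolding slope_def using p_pos pos_mod_bound[of p] by (auto intro: less_imp_le)

lemma slope_mem_0_p_iff:
  assumes "z \<in> norm_class p D 1"
  shows "slope z \<in> {0, p} \<longleftrightarrow> snd z = 0"
proof (cases "snd z = 0")
  case False
  have "slope z < p" using False p_pos unfolding slope_def by simp
  then show ?thesis using slope_nonzero[OF assms False] False by simp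
qed (simp add: slope_def)

lemma inj_on_slope: "inj_on slope (norm_class p D 1)"
proof (rule inj_onI)
  fix z z'
  assume z: "z \<in> norm_class p D 1" and z': "z' \<in> norm_class p D 1" and eq: "slope z = slope z'"
  consider "snd z = 0" "snd z' = 0" | "snd z \<noteq> 0" "snd z' \<noteq> 0"
    | "(snd z = 0) \<noteq> (snd z' = 0)"
    by blast
  then show "z = z'"
  proof cases
    case 1
    then show ?thesis
      using norm_class_one_snd_0[OF z] norm_class_one_snd_0[OF z'] eq p_ge_3
      unfolding slope_def by (auto simp: prod_eq_iff)
  next
    case 2
    have "p dvd (slope z * slope z - D) * (snd z - snd z')"
      using slope_conic[OF z 2(1)] slope_conic[OF z' 2(2)] eq by algebra
    then have "[snd z = snd z'] (mod p)"
      using not_dvd_sq_minus prime by (simp add: prime_dvd_mult_iff cong_iff_dvd_diff)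
    then have y: "snd z = snd z'"
      by (intro cong_less_imp_eq_int) (use norm_class_bounds[OF z] norm_class_bounds[OF z'] in auto)
    have "p dvd fst z - fst z'"
      using slope_cong[OF z 2(1)] slope_cong[OF z' 2(2)] eq y
      unfolding cong_iff_dvd_diff by algebra
    then have "fst z = fst z'"
      by (intro cong_less_imp_eq_int)
        (use norm_class_bounds[OF z] norm_class_bounds[OF z'] in \<open>auto simp: cong_iff_dvd_diff\<close>)
    then show ?thesis using y by (simp add: prod_eq_iff)
  next
    case 3
    then show ?thesis using slope_mem_0_p_iff[OF z] slope_mem_0_p_iff[OF z'] eq by simp
  qed
qed

lemma card_norm_class_one: "card (norm_class p D 1) \<le> nat p + 1"
proof -
  have "card (norm_class p D 1) \<le> card {0..p}"
    using card_inj_on_le[OF inj_on_slope] slope_range by blast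
  then show ?thesis using p_pos by simp
qed

lemma card_norm_class_minus_one: "card (norm_class p D (-1)) \<le> card (norm_class p D 1)"
proof (cases "norm_class p D (-1) = {}")
  case False
  then obtain z0 where z0: "z0 \<in> norm_class p D (-1)" by blast
  then have n0: "[qnorm D z0 = -1] (mod p)" unfolding norm_class_def by simp
  define g where "g z = qmod p (qmul D z z0)" for z
  have "g ` norm_class p D (-1) \<subseteq> norm_class p D 1"
  proof
    fix w assume "w \<in> g ` norm_class p D (-1)"
    then obtain z where z: "z \<in> norm_class p D (-1)" "w = g z" by blast
    have "[qnorm D w = qnorm D (qmul D z z0)] (mod p)"
      unfolding z(2) g_def by (intro qcong_qnorm cong_refl qcong_qmod)
    moreover have "[qnorm D (qmul D z z0) = (-1) * (-1)] (mod p)"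
      using z(1) n0 unfolding qnorm_qmul norm_class_def by (intro cong_mult) auto
    ultimately have "[qnorm D w = 1] (mod p)" using cong_trans by fastforce
    moreover have "w \<in> {0..<p} \<times> {0..<p}" unfolding z(2) g_def qmod_def using p_pos by simp
    ultimately show "w \<in> norm_class p D 1" unfolding norm_class_def by simp
  qed
  moreover have "inj_on g (norm_class p D (-1))"
    unfolding g_def using inj_on_qmul_norm_minus_one[OF n0] .
  ultimately show ?thesis using card_inj_on_le finite_norm_class by blast
qed simp

lemma card_sign_norm_classes: "card (norm_class p D 1 \<union> norm_class p D (-1)) \<le> 2 * (nat p + 1)"
proof -
  have "card (norm_class p D 1 \<union> norm_class p D (-1)) \<le> card (norm_class p D 1) + card (norm_class p D (-1))"
    by (rule card_Un_le)
  then show ?thesis using card_norm_class_one card_norm_class_minus_one by simp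
qed

end

section \<open>Square roots by Hensel's lemma\<close>

lemma hensel_lift_square:
  fixes p a c c' :: int
  assumes p: "prime p" "p \<ge> 3" and n: "n \<ge> 1"
    and a: "[a * a = c] (mod p ^ n)" "\<not> p dvd a" and c: "[c' = c] (mod p ^ n)"
  obtains b where "[b = a] (mod p ^ n)" "[b * b = c'] (mod p ^ Suc n)"
proof -
  obtain n' where n': "n = Suc n'" using n by (cases n) auto
  define Q where "Q = p ^ n'"
  have P: "p ^ n = Q * p" "p ^ Suc n = Q * p * p" unfolding Q_def n' by simp_all
  have "[c' = a * a] (mod p ^ n)" using a(1) c by (meson cong_sym cong_trans)
  then obtain E where E: "c' = a * a + Q * p * E" unfolding P by (metis cong_iff_lin cong_sym)
  have "\<not> p dvd 2" using p zdvd_imp_le[of p 2] by auto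
  then have "coprime (2 * a) p"
    using a(2) p prime_imp_coprime[of p "2 * a"] by (simp add: prime_dvd_mult_iff coprime_commute)
  then obtain v g where g: "2 * a * v = 1 + p * g"
    using cong_solve_coprime_int by (metis cong_iff_lin cong_sym)
  define b where "b = a + Q * p * E * v"
  have "[b = a] (mod p ^ n)" unfolding b_def P by (simp add: cong_iff_dvd_diff)
  moreover have "p ^ Suc n dvd c' - b * b" unfolding P b_def E using g by algebra
  then have "[b * b = c'] (mod p ^ Suc n)" by (simp add: cong_iff_dvd_diff dvd_diff_commute)
  ultimately show ?thesis using that by blast
qed

lemma hensel_square_roots:
  assumes p: "prime p" "p \<ge> 3" and d: "d \<in> Zp p" "\<not> p dvd d 1" and r: "[r * r = d 1] (mod p)"
  obtains f where "\<And>n. [f n * f n = d (Suc n)] (mod p ^ Suc n)"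
    and "\<And>n. f (Suc n) mod p ^ Suc n = f n"
proof -
  have p0: "p > 0" using p by simp
  define P where "P n b \<longleftrightarrow>
    0 \<le> b \<and> b < p ^ Suc n \<and> [b * b = d (Suc n)] (mod p ^ Suc n) \<and> \<not> p dvd b" for n b
  have "\<exists>f. \<forall>n. P n (f n) \<and> f (Suc n) mod p ^ Suc n = f n"
  proof (rule dependent_nat_choice)
    have "\<not> p dvd r"
    proof
      assume "p dvd r"
      then have "p dvd r * r" by simp
      with cong_dvd_iff[OF r] d(2) show False by blast
    qed
    then show "\<exists>b. P 0 b"
      using r p0 unfolding P_def
      by (intro exI[of _ "r mod p"]) (simp add: cong_def mod_simps dvd_mod_iff)
  next
    fix b n assume b: "P n b"
    have "[d (Suc (Suc n)) = d (Suc n)] (mod p ^ Suc n)" using Zp_cong_Suc[OF d(1)] .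
    then obtain b0 where b0: "[b0 = b] (mod p ^ Suc n)"
      "[b0 * b0 = d (Suc (Suc n))] (mod p ^ Suc (Suc n))"
      using hensel_lift_square[OF p, of "Suc n" b] b unfolding P_def by auto
    have "[b0 = b] (mod p)" using cong_power_modulus_le[OF b0(1), of 1] by simp
    then have "\<not> p dvd b0" using b unfolding P_def by (simp add: cong_dvd_iff)
    then have "\<not> p dvd b0 mod p ^ Suc (Suc n)" by (simp add: dvd_mod_iff)
    moreover have "b0 mod p ^ Suc (Suc n) mod p ^ Suc n = b"
      using b0(1) b unfolding P_def by (simp add: mod_mod_cancel le_imp_power_dvd cong_def)
    ultimately show "\<exists>b'. P (Suc n) b' \<and> b' mod p ^ Suc n = b"
      using b0(2) p0 unfolding P_def
      by (intro exI[of _ "b0 mod p ^ Suc (Suc n)"]) (simp add: cong_def mod_simps)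
  qed
  then show ?thesis using that unfolding P_def by blast
qed

lemma zp_square_of_square_mod_p:
  assumes p: "prime p" "p \<ge> 3" and d: "d \<in> Zp p" "\<not> p dvd d 1" and "[r * r = d 1] (mod p)"
  shows "zp_square p d"
proof -
  obtain f where f: "\<And>n. [f n * f n = d (Suc n)] (mod p ^ Suc n)"
    "\<And>n. f (Suc n) mod p ^ Suc n = f n"
    using hensel_square_roots[OF assms] by blast
  define y where "y n = f n mod p ^ n" for n
  have "[f (Suc n) = f n] (mod p ^ Suc n)" for n
    unfolding cong_def using f(2)[of n] by (metis mod_mod_trivial)
  then have "[f (Suc n) = f n] (mod p ^ n)" for n using cong_power_modulus_le le_SucI by blast
  then have "y \<in> Zp p" unfolding y_def using prime_gt_0_int[OF p(1)] by (rule Zp_of_coherent)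
  moreover have "zp_mul p y y = d"
  proof
    fix n
    have "[f n * f n = d (Suc n)] (mod p ^ n)"
      using cong_power_modulus_le[OF f(1)[of n], of n] by simp
    moreover have "d n = d (Suc n) mod p ^ n" using Zp_coherent[OF d(1), of n "Suc n"] by simp
    ultimately show "zp_mul p y y n = d n"
      unfolding zp_mul_def y_def by (simp add: cong_def mod_simps)
  qed
  ultimately show ?thesis unfolding zp_square_def by blast
qed

lemma zp_unit_not_dvd:
  assumes "p > 1" "zp_unit p d"
  shows "\<not> p dvd d 1"
proof
  assume "p dvd d 1"
  obtain y where "zp_mul p d y = zp_of_int p 1" using assms(2) unfolding zp_unit_def by blast
  then have "(d 1 * y 1) mod p = 1 mod p" unfolding zp_mul_def zp_of_int_def by (metis power_one_right)
  then show False using \<open>p dvd d 1\<close> assms(1) by simp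
qed

lemma nonsquare_mod_p:
  assumes "prime p" "p \<ge> 3" "d \<in> Zp p" "zp_unit p d" "\<not> zp_square p d"
  shows "\<not> [x * x = d 1] (mod p)"
  using zp_square_of_square_mod_p[OF assms(1-3) zp_unit_not_dvd[of p d]] assms by auto

section \<open>The closure of the powers of a unit of norm +-1\<close>

locale U0_element =
  fixes p :: int and d :: zp and lam :: zpd
  assumes prime: "prime p" and p_ge_3: "p \<ge> 3"
    and d_in_Zp: "d \<in> Zp p" and lam_in_U0: "lam \<in> U0 p d"
begin

abbreviation lam_pow :: "nat \<Rightarrow> zpd" where
  "lam_pow n \<equiv> zpd_pow p d lam n"

abbreviation lam_order :: nat where
  "lam_order \<equiv> mod_order p d lam"

abbreviation lam_nu :: enat where
  "lam_nu \<equiv> nu p (zpd_sub p (lam_pow lam_order) (zpd_one p))"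

lemma p_pos: "p > 0"
  using p_ge_3 by simp

lemma lam_pow_Zpd: "lam_pow n \<in> Zpd p"
  using Zpd_pow[OF U0_Zpd[OF lam_in_U0] d_in_Zp p_pos] .

lemma lam_pow_U0: "lam_pow n \<in> U0 p d"
  using zpd_pow_in_U0[OF p_pos d_in_Zp lam_in_U0] .

lemma lam_norm_sign:
  obtains e where "e \<in> {1, -1}" "\<And>M. [qnorm (d M) (zpd_res M lam) = e] (mod p ^ M)"
  using lam_in_U0 U0_iff[OF p_pos d_in_Zp] by blast

lemma zpd_res_lam_pow: "j \<le> M \<Longrightarrow> zpd_res j (lam_pow n) = qmod (p ^ j) (qpow (d M) (zpd_res M lam) n)"
  using zpd_res_coherent[OF lam_pow_Zpd] by (simp add: zpd_res_pow qmod_qmod_dvd le_imp_power_dvd)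

lemma zpd_res_eq_lam_pow_iff:
  assumes "z \<in> Zpd p" "j \<le> M"
  shows "zpd_res j z = zpd_res j (lam_pow n)
    \<longleftrightarrow> qcong (p ^ j) (zpd_res M z) (qpow (d M) (zpd_res M lam) n)"
  unfolding zpd_res_coherent[OF assms] zpd_res_lam_pow[OF assms(2)] qcong_iff_qmod_eq by simp

lemma lam_pow_res_eq_iff:
  "zpd_res j (lam_pow a) = zpd_res j (lam_pow b)
    \<longleftrightarrow> qcong (p ^ j) (qpow (d j) (zpd_res j lam) a) (qpow (d j) (zpd_res j lam) b)"
  by (simp add: zpd_res_lam_pow[OF order_refl] qcong_iff_qmod_eq)

lemma lam_pow_res_eq_one_iff:
  "j \<le> M \<Longrightarrow> zpd_res j (lam_pow a) = zpd_res j (zpd_one p)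
    \<longleftrightarrow> qcong (p ^ j) (qpow (d M) (zpd_res M lam) a) (1, 0)"
  by (simp add: zpd_res_lam_pow zpd_res_one qcong_iff_qmod_eq)

lemma lam_pow_res_cancel:
  assumes "zpd_res j (lam_pow a) = zpd_res j (lam_pow (a + b))"
  shows "zpd_res j (lam_pow b) = zpd_res j (zpd_one p)"
proof -
  obtain e where e: "e \<in> {1, -1}" "[qnorm (d j) (zpd_res j lam) = e] (mod p ^ j)"
    using lam_norm_sign by metis
  then have "[qnorm (d j) (zpd_res j lam) * e = 1] (mod p ^ j)"
    using cong_mult[OF e(2) cong_refl[of e]] by auto
  then show ?thesis
    using assms qcong_qpow_cancel unfolding lam_pow_res_eq_iff lam_pow_res_eq_one_iff[OF order_refl]
    by blast
qed

lemma lam_pow_res_diff: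
  assumes "a \<le> b" "zpd_res j (lam_pow a) = zpd_res j (lam_pow b)"
  shows "zpd_res j (lam_pow (b - a)) = zpd_res j (zpd_one p)"
  using lam_pow_res_cancel[of j a "b - a"] assms by simp

lemma lam_pow_res_mod:
  assumes "zpd_res j (lam_pow l) = zpd_res j (zpd_one p)"
  shows "zpd_res j (lam_pow n) = zpd_res j (lam_pow (n mod l))"
proof -
  let ?L = "zpd_res j lam" and ?D = "d j"
  have "qcong (p ^ j) (qpow ?D ?L l) (1, 0)"
    using assms unfolding lam_pow_res_eq_one_iff[OF order_refl] .
  then have "qcong (p ^ j) (qmul ?D (qpow ?D ?L (n mod l)) (qpow ?D (qpow ?D ?L l) (n div l)))
      (qmul ?D (qpow ?D ?L (n mod l)) (qpow ?D (1, 0) (n div l)))"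
    by (intro qcong_qmul qcong_refl qcong_qpow)
  moreover have "qpow ?D ?L n = qmul ?D (qpow ?D ?L (n mod l)) (qpow ?D (qpow ?D ?L l) (n div l))"
    by (metis mod_mult_div_eq qpow_add qpow_mult)
  ultimately show ?thesis unfolding lam_pow_res_eq_iff by (simp add: qpow_scalar)
qed

lemma exists_period_mod_p: "\<exists>l\<ge>1. zpd_res 1 (lam_pow l) = zpd_res 1 (zpd_one p)"
proof -
  have "zpd_res 1 (lam_pow n) \<in> {0..<p} \<times> {0..<p}" for n
    using zpd_res_bounds[OF p_pos lam_pow_Zpd, of 1] by simp
  then have "range (\<lambda>n. zpd_res 1 (lam_pow n)) \<subseteq> {0..<p} \<times> {0..<p}" by blast
  then have "finite (range (\<lambda>n. zpd_res 1 (lam_pow n)))" by (rule finite_subset) simp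
  then have "\<not> inj (\<lambda>n. zpd_res 1 (lam_pow n))" using finite_imageD infinite_UNIV_nat by blast
  then obtain a b where ab: "a \<noteq> b" "zpd_res 1 (lam_pow a) = zpd_res 1 (lam_pow b)"
    unfolding inj_def by blast
  have "\<exists>a b. a < b \<and> zpd_res 1 (lam_pow a) = zpd_res 1 (lam_pow b)"
  proof (cases "a < b")
    case True
    then show ?thesis using ab by blast
  next
    case False
    then show ?thesis using ab by (intro exI[of _ b] exI[of _ a]) auto
  qed
  then obtain a b where "a < b" "zpd_res 1 (lam_pow a) = zpd_res 1 (lam_pow b)" by blast
  then show ?thesis using lam_pow_res_diff[of a b 1] by (intro exI[of _ "b - a"]) auto
qed

lemma lam_order_Least: "lam_order = (LEAST l. 1 \<le> l \<and> zpd_res 1 (lam_pow l) = zpd_res 1 (zpd_one p))"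
proof -
  have "zpd_sub p (lam_pow l) (zpd_one p) \<in> pk_ideal p (enat 1)
      \<longleftrightarrow> zpd_res 1 (lam_pow l) = zpd_res 1 (zpd_one p)" for l
    using zpd_sub_in_pk_ideal_iff[OF lam_pow_Zpd Zpd_one[OF p_pos] p_pos]
      zpd_res_eq_le[OF lam_pow_Zpd Zpd_one[OF p_pos], of _ 1]
    by (auto simp: one_enat_def)
  then show ?thesis unfolding mod_order_def by simp
qed

lemma lam_order_pos: "1 \<le> lam_order"
  and lam_pow_order_res: "zpd_res 1 (lam_pow lam_order) = zpd_res 1 (zpd_one p)"
  using LeastI_ex[OF exists_period_mod_p] unfolding lam_order_Least by auto

lemma inj_on_lam_pow_res: "inj_on (\<lambda>i. zpd_res 1 (lam_pow i)) {..<lam_order}"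
proof -
  have "a = b" if "b < lam_order" "a \<le> b" "zpd_res 1 (lam_pow a) = zpd_res 1 (lam_pow b)" for a b
  proof (rule ccontr)
    assume "a \<noteq> b"
    then have "1 \<le> b - a" "b - a < lam_order" using that by auto
    moreover have "zpd_res 1 (lam_pow (b - a)) = zpd_res 1 (zpd_one p)"
      using lam_pow_res_diff that(2,3) .
    ultimately show False
      using not_less_Least[of "b - a" "\<lambda>l. 1 \<le> l \<and> zpd_res 1 (lam_pow l) = zpd_res 1 (zpd_one p)"]
      unfolding lam_order_Least by blast
  qed
  then show ?thesis unfolding inj_on_def by (metis lessThan_iff nat_le_linear)
qed

lemma le_lam_nu_iff:
  "enat j \<le> lam_nu \<longleftrightarrow> zpd_res j (lam_pow lam_order) = zpd_res j (zpd_one p)"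
proof -
  have "enat j \<le> lam_nu \<longleftrightarrow> zpd_sub p (lam_pow lam_order) (zpd_one p) \<in> pk_ideal p (enat j)"
    using pk_ideal_iff_le_nu[OF Zpd_sub[OF lam_pow_Zpd Zpd_one[OF p_pos] p_pos]] by simp
  also have "\<dots> \<longleftrightarrow> zpd_res j (lam_pow lam_order) = zpd_res j (zpd_one p)"
    using zpd_sub_in_pk_ideal_iff[OF lam_pow_Zpd Zpd_one[OF p_pos] p_pos]
      zpd_res_eq_le[OF lam_pow_Zpd Zpd_one[OF p_pos]] by auto
  finally show ?thesis .
qed

lemma one_le_lam_nu: "1 \<le> lam_nu"
  using le_lam_nu_iff[of 1] lam_pow_order_res by (simp add: one_enat_def)

lemma mem_closure_powers_iff:
  "z \<in> zpd_closure p {lam_pow n | n. True}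
    \<longleftrightarrow> z \<in> Zpd p \<and> (\<forall>m. \<exists>n. zpd_res m (lam_pow n) = zpd_res m z)"
proof -
  have "(\<exists>s\<in>{lam_pow n | n. True}. fst s m = fst z m \<and> snd s m = snd z m)
      \<longleftrightarrow> (\<exists>n. zpd_res m (lam_pow n) = zpd_res m z)" for m
    unfolding zpd_res_def by blast
  then show ?thesis unfolding zpd_closure_def by blast
qed

lemma closure_subset_cosets:
  assumes "z \<in> zpd_closure p {lam_pow n | n. True}"
  shows "\<exists>i<lam_order. z \<in> zpd_coset p (lam_pow i) lam_nu"
proof -
  have z: "z \<in> Zpd p" and "\<forall>m. \<exists>n. zpd_res m (lam_pow n) = zpd_res m z"
    using assms unfolding mem_closure_powers_iff by auto
  then obtain N where N: "\<And>m. zpd_res m (lam_pow (N m)) = zpd_res m z" by metis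
  define I where "I m = N m mod lam_order" for m
  have "range I \<subseteq> {..<lam_order}" unfolding I_def using lam_order_pos by auto
  then have "finite (range I)" by (rule finite_subset) simp
  then obtain i where i: "i \<in> range I" and inf: "infinite (I -` {i})"
    using inf_img_fin_domE infinite_UNIV_nat by blast
  have "zpd_res j z = zpd_res j (lam_pow i)" if j: "enat j \<le> lam_nu" for j
  proof -
    have "\<exists>m\<ge>j. I m = i"
      using inf unfolding infinite_nat_iff_unbounded_le vimage_singleton_eq by blast
    then obtain m where m: "j \<le> m" "I m = i" by blast
    have "zpd_res j z = zpd_res j (lam_pow (N m))"
      using zpd_res_eq_le[OF z lam_pow_Zpd m(1) N[of m, symmetric]] .
    also have "\<dots> = zpd_res j (lam_pow (N m mod lam_order))"
      using lam_pow_res_mod j unfolding le_lam_nu_iff .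
    finally show ?thesis using m(2) unfolding I_def by simp
  qed
  moreover have "i < lam_order" using i \<open>range I \<subseteq> {..<lam_order}\<close> by auto
  ultimately show ?thesis using z unfolding zpd_coset_iff[OF lam_pow_Zpd p_pos] by blast
qed

lemma cosets_subset_closure:
  assumes z: "z \<in> zpd_coset p (lam_pow i) lam_nu" "z \<in> U0 p d"
  shows "z \<in> zpd_closure p {lam_pow n | n. True}"
proof -
  have zZ: "z \<in> Zpd p" and zi: "\<And>j. enat j \<le> lam_nu \<Longrightarrow> zpd_res j z = zpd_res j (lam_pow i)"
    using z(1) unfolding zpd_coset_iff[OF lam_pow_Zpd p_pos] by auto
  have "\<exists>n. zpd_res m z = zpd_res m (lam_pow n)" for m
  proof (cases "enat m \<le> lam_nu")
    case True
    then show ?thesis using zi by blast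
  next
    case False
    then obtain K where K: "lam_nu = enat K" "K < m" by (cases lam_nu) auto
    let ?L = "zpd_res m lam" and ?D = "d m"
    obtain e where e: "e \<in> {1, -1}" "[qnorm ?D ?L = e] (mod p ^ m)" using lam_norm_sign by metis
    obtain e' where e': "e' \<in> {1, -1}" "[qnorm ?D (zpd_res m z) = e'] (mod p ^ m)"
      using z(2) U0_iff[OF p_pos d_in_Zp] by blast
    have "qcong (p ^ K) (qpow ?D ?L lam_order) (1, 0)"
      using le_lam_nu_iff[of K] K lam_pow_res_eq_one_iff[of K m] by simp
    moreover have "\<not> qcong (p ^ Suc K) (qpow ?D ?L lam_order) (1, 0)"
      using le_lam_nu_iff[of "Suc K"] K lam_pow_res_eq_one_iff[of "Suc K" m] by simp
    moreover have "1 \<le> K" using one_le_lam_nu K by (simp add: one_enat_def)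
    moreover have "qcong (p ^ K) (zpd_res m z) (qpow ?D ?L i)"
      using zi[of K] K zpd_res_eq_lam_pow_iff[OF zZ, of K m] by simp
    ultimately obtain n where "qcong (p ^ m) (zpd_res m z) (qpow ?D ?L n)"
      using qcong_qpow_lift[OF prime p_ge_3 _ K(2) _ _ e e'] by auto
    then show ?thesis using zpd_res_eq_lam_pow_iff[OF zZ order_refl] by blast
  qed
  then show ?thesis unfolding mem_closure_powers_iff using zZ by metis
qed

lemma closure_subset_U0: "zpd_closure p {lam_pow n | n. True} \<subseteq> U0 p d"
proof
  fix z assume "z \<in> zpd_closure p {lam_pow n | n. True}"
  then have z: "z \<in> Zpd p" and "\<And>m. \<exists>n. zpd_res m (lam_pow n) = zpd_res m z"
    unfolding mem_closure_powers_iff by auto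
  then show "z \<in> U0 p d" using U0_closed[OF p_ge_3 d_in_Zp z] lam_pow_U0 by blast
qed

lemma closure_eq_cosets:
  "zpd_closure p {lam_pow n | n. True} = (\<Union>i<lam_order. zpd_coset p (lam_pow i) lam_nu \<inter> U0 p d)"
proof (intro equalityI subsetI)
  fix z assume "z \<in> zpd_closure p {lam_pow n | n. True}"
  then show "z \<in> (\<Union>i<lam_order. zpd_coset p (lam_pow i) lam_nu \<inter> U0 p d)"
    using closure_subset_cosets closure_subset_U0 by blast
next
  fix z assume "z \<in> (\<Union>i<lam_order. zpd_coset p (lam_pow i) lam_nu \<inter> U0 p d)"
  then show "z \<in> zpd_closure p {lam_pow n | n. True}" using cosets_subset_closure by blast
qed

lemma lam_coset_res:
  assumes "z \<in> zpd_coset p (lam_pow i) lam_nu"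
  shows "zpd_res 1 z = zpd_res 1 (lam_pow i)"
proof -
  have "enat 1 \<le> lam_nu" using one_le_lam_nu by (simp add: one_enat_def)
  then show ?thesis using assms unfolding zpd_coset_iff[OF lam_pow_Zpd p_pos] by blast
qed

lemma cosets_disjoint:
  assumes "i < lam_order" "j < lam_order" "i \<noteq> j"
  shows "zpd_coset p (lam_pow i) lam_nu \<inter> zpd_coset p (lam_pow j) lam_nu = {}"
proof (rule ccontr)
  assume "zpd_coset p (lam_pow i) lam_nu \<inter> zpd_coset p (lam_pow j) lam_nu \<noteq> {}"
  then obtain z where "z \<in> zpd_coset p (lam_pow i) lam_nu" "z \<in> zpd_coset p (lam_pow j) lam_nu"
    by blast
  then have "zpd_res 1 (lam_pow i) = zpd_res 1 (lam_pow j)" using lam_coset_res by metis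
  then show False using inj_onD[OF inj_on_lam_pow_res] assms by simp
qed

lemma closure_eq_U0:
  assumes "int lam_order = 2 * (p + 1)" "lam_nu = 1" "\<And>x. \<not> [x * x = d 1] (mod p)"
  shows "zpd_closure p {lam_pow n | n. True} = U0 p d"
proof -
  interpret quadratic_nonresidue p "d 1" using prime p_ge_3 assms(3) by unfold_locales
  let ?S = "norm_class p (d 1) 1 \<union> norm_class p (d 1) (-1)"
  let ?T = "(\<lambda>i. zpd_res 1 (lam_pow i)) ` {..<lam_order}"
  have "int (2 * (nat p + 1)) = int lam_order" using assms(1) p_pos by simp
  then have card: "card ?S \<le> card ?T"
    using card_sign_norm_classes card_image[OF inj_on_lam_pow_res] by (simp only: of_nat_eq_iff) simp
  have sub: "?T \<subseteq> ?S"
    by (intro image_subsetI zpd_res_U0_in_norm_class[OF p_pos d_in_Zp lam_pow_U0])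
  have T: "?T = ?S" using card_seteq[OF _ sub card] finite_norm_class by blast
  have "z \<in> zpd_closure p {lam_pow n | n. True}" if z: "z \<in> U0 p d" for z
  proof -
    have "zpd_res 1 z \<in> ?T" unfolding T using zpd_res_U0_in_norm_class[OF p_pos d_in_Zp z] .
    then obtain i where i: "i \<in> {..<lam_order}" "zpd_res 1 z = zpd_res 1 (lam_pow i)"
      by (rule imageE)
    have "zpd_res j z = zpd_res j (lam_pow i)" if "enat j \<le> lam_nu" for j
      using that assms(2) zpd_res_eq_le[OF U0_Zpd[OF z] lam_pow_Zpd _ i(2)] by (simp add: one_enat_def)
    then have "z \<in> zpd_coset p (lam_pow i) lam_nu"
      using U0_Zpd[OF z] unfolding zpd_coset_iff[OF lam_pow_Zpd p_pos] by blast
    then show ?thesis using cosets_subset_closure z by blast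
  qed
  then show ?thesis using closure_subset_U0 by blast
qed

end

theorem theorem7:
  fixes p :: int and d :: zp and lam :: zpd and l :: nat and k :: enat
  assumes "prime p" and "p \<ge> 3"
    and "d \<in> Zp p" and "zp_unit p d" and "\<not> zp_square p d"
    and "lam \<in> U0 p d"
    and "l = mod_order p d lam"
    and "k = nu p (zpd_sub p (zpd_pow p d lam l) (zpd_one p))"
  shows "zpd_closure p {zpd_pow p d lam n | n. True}
           = (\<Union>i<l. zpd_coset p (zpd_pow p d lam i) k \<inter> U0 p d)
       \<and> (\<forall>i<l. \<forall>j<l. i \<noteq> j \<longrightarrow>
            (zpd_coset p (zpd_pow p d lam i) k \<inter> U0 p d)
              \<inter> (zpd_coset p (zpd_pow p d lam j) k \<inter> U0 p d) = {})
       \<and> (int l = 2 * (p + 1) \<and> k = 1 \<longrightarrow>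
            zpd_closure p {zpd_pow p d lam n | n. True} = U0 p d)"
proof -
  interpret U0_element p d lam using assms(1,2,3,6) by unfold_locales
  have "\<And>x. \<not> [x * x = d 1] (mod p)" using nonsquare_mod_p[OF assms(1-5)] .
  then show ?thesis
    unfolding assms(7,8) using closure_eq_cosets cosets_disjoint closure_eq_U0 by blast
qed

end
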